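(* Let $(x_n)_{n\ge0}$ be an infinite path in $\Gamma$ with $\ell(x_n)=n$. For each nonreal $z$ let $v_z$ be the nonzero solution of $Jv_z=zv_z$ on $\Gamma$ normalized by $v_z(x_0)=1$. Then for each $n\ge0$ there exist polynomials $b_n$ and $a_{n,x}$ ($x\in\Gamma_{x_n}$) with real coefficients such that $v_z(x)=a_{n,x}(z)/b_n(z)$ for all $x\in\Gamma_{x_n}$ and all nonreal $z$; moreover $b_n$ divides $b_{n+1}$ for every $n$.
   Context: Let $\Gamma$ be an infinite connected tree whose vertices are arranged in levels $\ell(x)\in\{0,1,2,\dots\}$: every vertex $x$ is adjacent to exactly one vertex $x'$ with $\ell(x')=\ell(x)+1$; for $\ell(x)\ge 1$ the set $N_x=\{y:\ y'=x\}$ of neighbours of $x$ on level $\ell(x)-1$ is finite and nonempty; $N_x=\emptyset$ if $\ell(x)=0$; there are no other edges. For $x\in\Gamma$, $\Gamma_x$ is the finite subtree consisting of $x$ and all its descendants. Fix $\lambda_x>0$, $\beta_x\in\mathbb R$. The Jacobi matrix $J$ acts on functions $v:\Gamma\to\mathbb C$ by $(Jv)(x)=\lambda_x v(x')+\beta_x v(x)+\sum_{y\in N_x}\lambda_y v(y)$. For nonreal $z$ a nonzero solution of $Jv=zv$ on $\Gamma$ exists, is unique up to a constant multiple, and vanishes nowhere. *)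

theory Defs
  imports "HOL-Computational_Algebra.Polynomial" Complex_Main
begin

text \<open>A levelled tree on the vertex type 'v: lev x is the level, par x = x' is the unique
  neighbour one level up. N_x = {y. par y = x}.\<close>

definition children :: "('v \<Rightarrow> 'v) \<Rightarrow> 'v \<Rightarrow> 'v set" where
  "children par x = {y. par y = x}"

definition level_tree :: "('v \<Rightarrow> nat) \<Rightarrow> ('v \<Rightarrow> 'v) \<Rightarrow> bool" where
  "level_tree lev par \<longleftrightarrow>
     (\<forall>x. lev (par x) = lev x + 1) \<and>
     (\<forall>x. lev x \<ge> 1 \<longrightarrow> finite (children par x) \<and> children par x \<noteq> {}) \<and>
     (\<forall>x. lev x = 0 \<longrightarrow> children par x = {}) \<and>
     (\<forall>x y. \<exists>m n. (par ^^ m) x = (par ^^ n) y)"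

definition subtree :: "('v \<Rightarrow> 'v) \<Rightarrow> 'v \<Rightarrow> 'v set" where
  "subtree par x = {y. \<exists>k. (par ^^ k) y = x}"

definition jacobi :: "('v \<Rightarrow> 'v) \<Rightarrow> ('v \<Rightarrow> real) \<Rightarrow> ('v \<Rightarrow> real) \<Rightarrow> ('v \<Rightarrow> complex) \<Rightarrow> 'v \<Rightarrow> complex" where
  "jacobi par lam bet v x =
     of_real (lam x) * v (par x) + of_real (bet x) * v x
     + (\<Sum>y\<in>children par x. of_real (lam y) * v y)"

end

theory Submission
  imports Defs
begin

text \<open>Every vertex y has a ratio function R_y with v_z(y) = R_y(z) v_z(y') which maps each open
  half-plane into the opposite one. Evaluating the eigenvalue equation at y gives
  R_y(z) = \<lambda>_y / (z - \<beta>_y - \<Sum>_{c \<in> N_y} \<lambda>_c R_c(z)); by induction on the level, all R_y are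
  rational with real coefficients, and the half-plane property keeps the denominator nonzero off
  the real axis. Since v_z(x_0) = 1 and the tree is connected, every v_z(x) is then such a
  rational function. The subtrees \<Gamma>_{x_n} are finite and increasing in n, so the product of the
  denominators over \<Gamma>_{x_n} is a common denominator b_n, and b_n divides b_{n+1}.\<close>

abbreviation cpoly :: "real poly \<Rightarrow> complex \<Rightarrow> complex" where
  "cpoly p \<equiv> poly (map_poly of_real p)"

lemma map_poly_of_real_add [simp]:
  "map_poly (of_real :: real \<Rightarrow> 'a::{real_algebra_1,comm_ring_1}) (p + q) =
     map_poly of_real p + map_poly of_real q"
  by (rule poly_eqI) (simp add: coeff_map_poly)

lemma map_poly_of_real_mult [simp]:
  "map_poly (of_real :: real \<Rightarrow> 'a::{real_algebra_1,comm_ring_1}) (p * q) =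
     map_poly of_real p * map_poly of_real q"
  by (rule poly_eqI) (simp add: coeff_map_poly coeff_mult)

lemma map_poly_of_real_prod [simp]:
  "map_poly (of_real :: real \<Rightarrow> 'a::{real_algebra_1,comm_ring_1}) (\<Prod>x\<in>A. f x) =
     (\<Prod>x\<in>A. map_poly of_real (f x))"
  by (induction A rule: infinite_finite_induct) simp_all

lemma cpoly_const [simp]: "cpoly [:c:] z = of_real c"
  by (simp add: map_poly_pCons)

lemma cpoly_X [simp]: "cpoly [:0, 1:] z = z"
  by (simp add: map_poly_pCons)

subsection \<open>Rational functions with real coefficients off the real axis\<close>

definition real_rational_on_nonreal :: "(complex \<Rightarrow> complex) \<Rightarrow> bool" where
  "real_rational_on_nonreal f \<longleftrightarrow>
     (\<exists>p q. \<forall>z. Im z \<noteq> 0 \<longrightarrow> cpoly q z \<noteq> 0 \<and> f z = cpoly p z / cpoly q z)"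

lemma real_rational_on_nonreal_cong:
  "(\<And>z. Im z \<noteq> 0 \<Longrightarrow> f z = g z) \<Longrightarrow> real_rational_on_nonreal g \<Longrightarrow> real_rational_on_nonreal f"
  unfolding real_rational_on_nonreal_def by metis

lemma real_rational_on_nonreal_const: "real_rational_on_nonreal (\<lambda>z. of_real c)"
  unfolding real_rational_on_nonreal_def by (intro exI[of _ "[:c:]"] exI[of _ 1]) simp

lemma real_rational_on_nonreal_ident: "real_rational_on_nonreal (\<lambda>z. z)"
  unfolding real_rational_on_nonreal_def by (intro exI[of _ "[:0, 1:]"] exI[of _ 1]) simp

lemma real_rational_on_nonreal_add:
  assumes "real_rational_on_nonreal f" "real_rational_on_nonreal g"
  shows "real_rational_on_nonreal (\<lambda>z. f z + g z)"
proof -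
  obtain p q where "\<And>z. Im z \<noteq> 0 \<Longrightarrow> cpoly q z \<noteq> 0 \<and> f z = cpoly p z / cpoly q z"
    using assms(1) unfolding real_rational_on_nonreal_def by blast
  moreover obtain r s where "\<And>z. Im z \<noteq> 0 \<Longrightarrow> cpoly s z \<noteq> 0 \<and> g z = cpoly r z / cpoly s z"
    using assms(2) unfolding real_rational_on_nonreal_def by blast
  ultimately show ?thesis
    unfolding real_rational_on_nonreal_def
    by (intro exI[of _ "p * s + r * q"] exI[of _ "q * s"]) (simp add: field_simps)
qed

lemma real_rational_on_nonreal_mult:
  assumes "real_rational_on_nonreal f" "real_rational_on_nonreal g"
  shows "real_rational_on_nonreal (\<lambda>z. f z * g z)"
proof -
  obtain p q where "\<And>z. Im z \<noteq> 0 \<Longrightarrow> cpoly q z \<noteq> 0 \<and> f z = cpoly p z / cpoly q z"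
    using assms(1) unfolding real_rational_on_nonreal_def by blast
  moreover obtain r s where "\<And>z. Im z \<noteq> 0 \<Longrightarrow> cpoly s z \<noteq> 0 \<and> g z = cpoly r z / cpoly s z"
    using assms(2) unfolding real_rational_on_nonreal_def by blast
  ultimately show ?thesis
    unfolding real_rational_on_nonreal_def
    by (intro exI[of _ "p * r"] exI[of _ "q * s"]) simp
qed

lemma real_rational_on_nonreal_divide:
  assumes "real_rational_on_nonreal f" "real_rational_on_nonreal g"
    and "\<And>z. Im z \<noteq> 0 \<Longrightarrow> g z \<noteq> 0"
  shows "real_rational_on_nonreal (\<lambda>z. f z / g z)"
proof -
  obtain p q where "\<And>z. Im z \<noteq> 0 \<Longrightarrow> cpoly q z \<noteq> 0 \<and> f z = cpoly p z / cpoly q z"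
    using assms(1) unfolding real_rational_on_nonreal_def by blast
  moreover obtain r s where "\<And>z. Im z \<noteq> 0 \<Longrightarrow> cpoly s z \<noteq> 0 \<and> g z = cpoly r z / cpoly s z"
    using assms(2) unfolding real_rational_on_nonreal_def by blast
  ultimately show ?thesis
    unfolding real_rational_on_nonreal_def using assms(3)
    by (intro exI[of _ "p * s"] exI[of _ "q * r"]) force
qed

lemma real_rational_on_nonreal_diff:
  assumes "real_rational_on_nonreal f" "real_rational_on_nonreal g"
  shows "real_rational_on_nonreal (\<lambda>z. f z - g z)"
proof -
  have "real_rational_on_nonreal (\<lambda>z. f z + of_real (-1) * g z)"
    by (intro real_rational_on_nonreal_add real_rational_on_nonreal_mult assms
        real_rational_on_nonreal_const)
  then show ?thesis by (rule real_rational_on_nonreal_cong[rotated]) simp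
qed

lemma real_rational_on_nonreal_sum:
  assumes "\<And>c. c \<in> A \<Longrightarrow> real_rational_on_nonreal (f c)"
  shows "real_rational_on_nonreal (\<lambda>z. \<Sum>c\<in>A. f c z)"
  using assms
proof (induction A rule: infinite_finite_induct)
  case (insert x F)
  then show ?case by (simp add: real_rational_on_nonreal_add)
qed (use real_rational_on_nonreal_const[of 0] in simp_all)

lemma real_rational_on_nonreal_common_denominators:
  fixes f :: "'v \<Rightarrow> complex \<Rightarrow> complex" and G :: "nat \<Rightarrow> 'v set"
  assumes rational: "\<And>x. real_rational_on_nonreal (f x)"
    and finite: "\<And>n. finite (G n)"
    and mono: "\<And>n. G n \<subseteq> G (Suc n)"
  shows "\<exists>(b :: nat \<Rightarrow> real poly) a. (\<forall>n. b n \<noteq> 0) \<and>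
           (\<forall>n. \<forall>x\<in>G n. \<forall>z. Im z \<noteq> 0 \<longrightarrow> f x z = cpoly (a n x) z / cpoly (b n) z) \<and>
           (\<forall>n. b n dvd b (Suc n))"
proof -
  obtain P Q where PQ: "\<And>x z. Im z \<noteq> 0 \<Longrightarrow> cpoly (Q x) z \<noteq> 0 \<and> f x z = cpoly (P x) z / cpoly (Q x) z"
    using rational unfolding real_rational_on_nonreal_def by metis
  define b where "b n = (\<Prod>x\<in>G n. Q x)" for n
  define a where "a n x = P x * (\<Prod>y\<in>G n - {x}. Q y)" for n x
  have b_nonzero: "cpoly (b n) z \<noteq> 0" if "Im z \<noteq> 0" for n z
    unfolding b_def using finite PQ that by (simp add: poly_prod)
  have "f x z = cpoly (a n x) z / cpoly (b n) z" if "x \<in> G n" "Im z \<noteq> 0" for n x z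
  proof -
    define others where "others = (\<Prod>y\<in>G n - {x}. cpoly (Q y) z)"
    have "others \<noteq> 0"
      unfolding others_def using finite PQ \<open>Im z \<noteq> 0\<close> by simp
    moreover have "cpoly (b n) z = cpoly (Q x) z * others"
      unfolding b_def others_def using finite that by (simp add: poly_prod prod.remove)
    ultimately show ?thesis
      unfolding a_def others_def using PQ \<open>Im z \<noteq> 0\<close> by (simp add: poly_prod)
  qed
  moreover have "b n \<noteq> 0" for n
    using b_nonzero[of \<i> n] by auto
  moreover have "b n dvd b (Suc n)" for n
    unfolding b_def by (rule prod_dvd_prod_subset[OF finite mono])
  ultimately show ?thesis by blast
qed

subsection \<open>Levelled trees\<close>

lemma level_tree_level_par: "level_tree lev par \<Longrightarrow> lev (par x) = lev x + 1"
  unfolding level_tree_def by blast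

lemma level_tree_finite_children: "level_tree lev par \<Longrightarrow> finite (children par x)"
  unfolding level_tree_def by (cases "lev x = 0") auto

lemma level_tree_level_child_less:
  assumes "level_tree lev par" "c \<in> children par y"
  shows "lev c < lev y"
  using assms level_tree_level_par[OF assms(1), of c] unfolding children_def by simp

lemma level_tree_common_ancestor: "level_tree lev par \<Longrightarrow> \<exists>m n. (par ^^ m) x = (par ^^ n) y"
  unfolding level_tree_def by blast

lemma subtree_self: "x \<in> subtree par x"
  unfolding subtree_def by (intro CollectI exI[of _ 0]) simp

lemma subtree_unfold: "subtree par x = insert x (\<Union>c\<in>children par x. subtree par c)"
proof (intro equalityI subsetI)
  fix y assume "y \<in> subtree par x"
  then obtain k where k: "(par ^^ k) y = x" by (auto simp: subtree_def)
  show "y \<in> insert x (\<Union>c\<in>children par x. subtree par c)"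
  proof (cases k)
    case 0
    then show ?thesis using k by simp
  next
    case (Suc j)
    then have "(par ^^ j) y \<in> children par x" using k by (simp add: children_def)
    moreover have "y \<in> subtree par ((par ^^ j) y)" unfolding subtree_def by blast
    ultimately show ?thesis by blast
  qed
next
  fix y assume "y \<in> insert x (\<Union>c\<in>children par x. subtree par c)"
  then show "y \<in> subtree par x"
  proof
    assume "y = x"
    then show ?thesis using subtree_self by simp
  next
    assume "y \<in> (\<Union>c\<in>children par x. subtree par c)"
    then obtain c k where "par c = x" "(par ^^ k) y = c"
      by (auto simp: subtree_def children_def)
    then have "(par ^^ Suc k) y = x" by simp
    then show ?thesis unfolding subtree_def by blast
  qed
qed

lemma level_tree_finite_subtree:
  assumes "level_tree lev par"
  shows "finite (subtree par x)"
proof (induction "lev x" arbitrary: x rule: less_induct)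
  case less
  then show ?case
    using level_tree_level_child_less[OF assms] level_tree_finite_children[OF assms]
    by (subst subtree_unfold) auto
qed

lemma subtree_subset_subtree_par: "subtree par x \<subseteq> subtree par (par x)"
proof
  fix y assume "y \<in> subtree par x"
  then obtain k where "(par ^^ k) y = x" by (auto simp: subtree_def)
  then have "(par ^^ Suc k) y = par x" by simp
  then show "y \<in> subtree par (par x)" unfolding subtree_def by blast
qed

subsection \<open>Ratio functions of an eigenfunction\<close>

definition reverses_half_planes :: "(complex \<Rightarrow> complex) \<Rightarrow> bool" where
  "reverses_half_planes R \<longleftrightarrow> (\<forall>z. Im z \<noteq> 0 \<longrightarrow> Im z * Im (R z) < 0)"

lemma reverses_half_planes_nonzero: "reverses_half_planes R \<Longrightarrow> Im z \<noteq> 0 \<Longrightarrow> R z \<noteq> 0"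
  unfolding reverses_half_planes_def by force

lemma Im_mult_Im_continued_fraction_denom_pos:
  assumes "Im z \<noteq> 0"
    and "\<And>c. c \<in> C \<Longrightarrow> lam c > 0" "\<And>c. c \<in> C \<Longrightarrow> reverses_half_planes (R c)"
  shows "Im z * Im (z - of_real b - (\<Sum>c\<in>C. of_real (lam c) * R c z)) > 0"
proof -
  have "(\<Sum>c\<in>C. lam c * (Im z * Im (R c z))) \<le> 0"
  proof (rule sum_nonpos)
    fix c assume "c \<in> C"
    then have "lam c > 0" "Im z * Im (R c z) < 0"
      using assms unfolding reverses_half_planes_def by auto
    then show "lam c * (Im z * Im (R c z)) \<le> 0" by (simp add: mult_pos_neg less_imp_le)
  qed
  moreover have "(Im z)\<^sup>2 > 0" using assms(1) by simp
  moreover have "Im z * Im (z - of_real b - (\<Sum>c\<in>C. of_real (lam c) * R c z))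
                   = (Im z)\<^sup>2 - (\<Sum>c\<in>C. lam c * (Im z * Im (R c z)))"
    by (simp add: Im_sum sum_distrib_left power2_eq_square algebra_simps)
  ultimately show ?thesis by linarith
qed

lemma reverses_half_planes_continued_fraction:
  assumes "l > 0"
    and "\<And>c. c \<in> C \<Longrightarrow> lam c > 0" "\<And>c. c \<in> C \<Longrightarrow> reverses_half_planes (R c)"
  shows "reverses_half_planes (\<lambda>z. of_real l / (z - of_real b - (\<Sum>c\<in>C. of_real (lam c) * R c z)))"
  unfolding reverses_half_planes_def
proof (intro allI impI)
  fix z :: complex assume z: "Im z \<noteq> 0"
  define d where "d = z - of_real b - (\<Sum>c\<in>C. of_real (lam c) * R c z)"
  have pos: "Im z * Im d > 0"
    unfolding d_def using Im_mult_Im_continued_fraction_denom_pos[OF z assms(2,3)] .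
  then have "(cmod d)\<^sup>2 > 0" by auto
  moreover have "Im z * Im (of_real l / d) = - l * (Im z * Im d) / (cmod d)\<^sup>2"
    by (simp add: Im_divide cmod_power2)
  ultimately show "Im z * Im (of_real l / d) < 0"
    using pos \<open>l > 0\<close> by (simp add: divide_neg_pos)
qed

locale jacobi_eigenfunction =
  fixes lev :: "'v \<Rightarrow> nat" and par :: "'v \<Rightarrow> 'v" and lam bet :: "'v \<Rightarrow> real"
    and v :: "complex \<Rightarrow> 'v \<Rightarrow> complex"
  assumes tree: "level_tree lev par"
    and lam_pos: "\<And>x. lam x > 0"
    and eigen: "\<And>z. Im z \<noteq> 0 \<Longrightarrow> jacobi par lam bet (v z) = (\<lambda>x. z * v z x)"
begin

lemma eigen_equation_at:
  assumes "Im z \<noteq> 0"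
  shows "of_real (lam y) * v z (par y) + of_real (bet y) * v z y
           + (\<Sum>c\<in>children par y. of_real (lam c) * v z c) = z * v z y"
  using eigen[OF assms] unfolding jacobi_def by (simp add: fun_eq_iff)

lemma ratio_function_exists:
  "\<exists>R. real_rational_on_nonreal R \<and> reverses_half_planes R \<and>
       (\<forall>z. Im z \<noteq> 0 \<longrightarrow> v z y = R z * v z (par y))"
proof (induction "lev y" arbitrary: y rule: less_induct)
  case less
  define C where "C = children par y"
  have "\<forall>c\<in>C. \<exists>R. real_rational_on_nonreal R \<and> reverses_half_planes R \<and>
          (\<forall>z. Im z \<noteq> 0 \<longrightarrow> v z c = R z * v z y)"
  proof
    fix c assume "c \<in> C"
    then have "lev c < lev y" "par c = y"
      unfolding C_def using level_tree_level_child_less[OF tree] by (auto simp: children_def)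
    then show "\<exists>R. real_rational_on_nonreal R \<and> reverses_half_planes R \<and>
          (\<forall>z. Im z \<noteq> 0 \<longrightarrow> v z c = R z * v z y)"
      using less by blast
  qed
  then obtain Rc where Rc: "\<forall>c\<in>C. real_rational_on_nonreal (Rc c) \<and> reverses_half_planes (Rc c) \<and>
          (\<forall>z. Im z \<noteq> 0 \<longrightarrow> v z c = Rc c z * v z y)"
    by (rule bchoice[THEN exE])
  define D where "D z = z - of_real (bet y) - (\<Sum>c\<in>C. of_real (lam c) * Rc c z)" for z
  define R where "R z = of_real (lam y) / D z" for z
  have D_nonzero: "D z \<noteq> 0" if "Im z \<noteq> 0" for z
  proof -
    have "Im z * Im (D z) > 0"
      unfolding D_def using Rc by (intro Im_mult_Im_continued_fraction_denom_pos that lam_pos) blast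
    then show ?thesis by auto
  qed
  have "real_rational_on_nonreal D"
    unfolding D_def using Rc
    by (intro real_rational_on_nonreal_diff real_rational_on_nonreal_ident
        real_rational_on_nonreal_const real_rational_on_nonreal_sum real_rational_on_nonreal_mult)
      blast
  then have "real_rational_on_nonreal R"
    unfolding R_def using D_nonzero
    by (intro real_rational_on_nonreal_divide real_rational_on_nonreal_const)
  moreover have "reverses_half_planes R"
    unfolding R_def D_def using Rc by (intro reverses_half_planes_continued_fraction lam_pos) blast
  moreover have "v z y = R z * v z (par y)" if "Im z \<noteq> 0" for z
  proof -
    have sum_eq: "(\<Sum>c\<in>C. of_real (lam c) * v z c) = (\<Sum>c\<in>C. of_real (lam c) * Rc c z) * v z y"
      unfolding sum_distrib_right
    proof (rule sum.cong[OF refl])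
      fix c assume "c \<in> C"
      then have "v z c = Rc c z * v z y" using Rc that by blast
      then show "of_real (lam c) * v z c = of_real (lam c) * Rc c z * v z y" by simp
    qed
    have "of_real (lam y) * v z (par y)
            = z * v z y - of_real (bet y) * v z y - (\<Sum>c\<in>C. of_real (lam c) * v z c)"
      using eigen_equation_at[OF that, of y] unfolding C_def by (simp add: algebra_simps)
    also have "\<dots> = D z * v z y"
      unfolding sum_eq D_def by (simp add: algebra_simps)
    finally show ?thesis
      unfolding R_def using D_nonzero[OF that] by (simp add: field_simps)
  qed
  ultimately show ?case by blast
qed

lemma rational_at_ancestor:
  assumes "real_rational_on_nonreal (\<lambda>z. v z x)"
  shows "real_rational_on_nonreal (\<lambda>z. v z ((par ^^ n) x))"
proof (induction n)
  case 0
  then show ?case using assms by simp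
next
  case (Suc n)
  obtain R where "real_rational_on_nonreal R" "reverses_half_planes R"
    and ratio: "\<And>z. Im z \<noteq> 0 \<Longrightarrow> v z ((par ^^ n) x) = R z * v z (par ((par ^^ n) x))"
    using ratio_function_exists by blast
  then have "real_rational_on_nonreal (\<lambda>z. v z ((par ^^ n) x) / R z)"
    using Suc by (intro real_rational_on_nonreal_divide) (auto simp: reverses_half_planes_nonzero)
  then show ?case
    by (rule real_rational_on_nonreal_cong[rotated])
      (simp add: ratio reverses_half_planes_nonzero[OF \<open>reverses_half_planes R\<close>])
qed

lemma rational_at_descendant:
  assumes "real_rational_on_nonreal (\<lambda>z. v z ((par ^^ n) x))"
  shows "real_rational_on_nonreal (\<lambda>z. v z x)"
  using assms
proof (induction n arbitrary: x)
  case 0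
  then show ?case by simp
next
  case (Suc n)
  have "(par ^^ Suc n) x = (par ^^ n) (par x)"
    by (simp only: funpow_Suc_right comp_apply)
  then have "real_rational_on_nonreal (\<lambda>z. v z (par x))"
    using Suc.IH Suc.prems by metis
  moreover obtain R where "real_rational_on_nonreal R"
    and ratio: "\<And>z. Im z \<noteq> 0 \<Longrightarrow> v z x = R z * v z (par x)"
    using ratio_function_exists by blast
  ultimately have "real_rational_on_nonreal (\<lambda>z. R z * v z (par x))"
    by (intro real_rational_on_nonreal_mult)
  then show ?case by (rule real_rational_on_nonreal_cong[rotated]) (simp add: ratio)
qed

lemma rational_everywhere:
  assumes "real_rational_on_nonreal (\<lambda>z. v z w)"
  shows "real_rational_on_nonreal (\<lambda>z. v z x)"
proof -
  obtain m n where "(par ^^ m) x = (par ^^ n) w"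
    using level_tree_common_ancestor[OF tree] by blast
  then show ?thesis
    using rational_at_ancestor[OF assms, of n] rational_at_descendant[of m x] by simp
qed

end

theorem corollary3:
  fixes lev :: "'v \<Rightarrow> nat" and par :: "'v \<Rightarrow> 'v"
    and lam bet :: "'v \<Rightarrow> real"
    and xs :: "nat \<Rightarrow> 'v"
    and v :: "complex \<Rightarrow> 'v \<Rightarrow> complex"
  assumes tree: "level_tree lev par"
    and lam_pos: "\<And>x. lam x > 0"
    and path_level: "\<And>n. lev (xs n) = n"
    and path_adj: "\<And>n. par (xs n) = xs (Suc n)"
    and sol: "\<And>z. Im z \<noteq> 0 \<Longrightarrow> jacobi par lam bet (v z) = (\<lambda>x. z * v z x)"
    and norm: "\<And>z. Im z \<noteq> 0 \<Longrightarrow> v z (xs 0) = 1"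
  shows "\<exists>(b :: nat \<Rightarrow> real poly) (a :: nat \<Rightarrow> 'v \<Rightarrow> real poly).
           (\<forall>n. b n \<noteq> 0) \<and>
           (\<forall>n. \<forall>x\<in>subtree par (xs n). \<forall>z. Im z \<noteq> 0 \<longrightarrow>
               v z x = poly (map_poly of_real (a n x)) z / poly (map_poly of_real (b n)) z) \<and>
           (\<forall>n. b n dvd b (Suc n))"
proof -
  interpret jacobi_eigenfunction lev par lam bet v
    using tree lam_pos sol by unfold_locales
  have "real_rational_on_nonreal (\<lambda>z. v z (xs 0))"
    by (rule real_rational_on_nonreal_cong[OF _ real_rational_on_nonreal_const[of 1]]) (simp add: norm)
  then have rational: "\<And>x. real_rational_on_nonreal (\<lambda>z. v z x)"
    by (rule rational_everywhere)
  have "subtree par (xs n) \<subseteq> subtree par (xs (Suc n))" for n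
    using subtree_subset_subtree_par[of par "xs n"] by (simp add: path_adj)
  then show ?thesis
    using real_rational_on_nonreal_common_denominators[of "\<lambda>x z. v z x" "\<lambda>n. subtree par (xs n)"]
      rational level_tree_finite_subtree[OF tree] by blast
qed

end
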